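(* Let $\Gamma=(G,w,\ell)$ be a tropical curve and $P\in\mathcal C_G$. Then the class $[T_P]$ contains no effective divisor (i.e. $r_\Gamma(T_P)=-1$) if and only if $P=\emptyset$ and $\Gamma$ is pure (i.e. $w(v)=0$ for all $v\in V$).
   Context: A tropical curve is a triple $\Gamma=(G,w,\ell)$ where $G=(V,E)$ is a finite connected graph (loops and multiple edges allowed), $w\colon V\to\mathbb Z_{\ge 0}$ with $2w(v)-2+\deg_G(v)>0$ for all $v$ (loops count twice), and $\ell\colon E\to\mathbb R_{>0}$; it is viewed as a metric space with edges segments (circles for loops) of length $\ell(e)$; $p_e$ is the mid-point of $e$. Divisors, rational functions and linear equivalence are the usual tropical ones; the rank $r_\Gamma(D)$ equals $-1$ exactly when $D$ is not linearly equivalent to any effective divisor. $\mathcal C_G$ is the set of $P\subseteq E$ such that every vertex has even degree in the subgraph spanned by $P$ (loops counting twice). For $P\in\mathcal C_G$, $$T_P:=\sum_{v\in V}\Big(\frac{\deg_P(v)}{2}-1+w(v)\Big)v+\sum_{e\in E\setminus P}p_e,$$ whose class is a theta-characteristic of $\Gamma$. *)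

theory Defs
  imports Complex_Main
begin

text \<open>The graph G has vertex set V, edge set E,
  and each edge e has two (possibly equal) endpoints src e and tgt e (an arbitrary
  orientation, used only to parametrise e as the segment [0, l e]).  Loops are
  edges with src e = tgt e, multiple edges are distinct elements of E.\<close>

definition deg_in :: "'e set \<Rightarrow> ('e \<Rightarrow> 'v) \<Rightarrow> ('e \<Rightarrow> 'v) \<Rightarrow> 'v \<Rightarrow> nat" where
  "deg_in P src tgt v = card {e\<in>P. src e = v} + card {e\<in>P. tgt e = v}"
  \<comment> \<open>degree of v in the subgraph spanned by P; loops count twice\<close>

definition graph_connected :: "'v set \<Rightarrow> 'e set \<Rightarrow> ('e \<Rightarrow> 'v) \<Rightarrow> ('e \<Rightarrow> 'v) \<Rightarrow> bool" where
  "graph_connected V E src tgt \<longleftrightarrow>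
     (\<forall>u\<in>V. \<forall>v\<in>V. (u, v) \<in> ({(src e, tgt e) | e. e \<in> E} \<union> {(tgt e, src e) | e. e \<in> E})\<^sup>*)"

definition tropical_curve ::
  "'v set \<Rightarrow> 'e set \<Rightarrow> ('e \<Rightarrow> 'v) \<Rightarrow> ('e \<Rightarrow> 'v) \<Rightarrow> ('v \<Rightarrow> nat) \<Rightarrow> ('e \<Rightarrow> real) \<Rightarrow> bool" where
  "tropical_curve V E src tgt w l \<longleftrightarrow>
     finite V \<and> V \<noteq> {} \<and> finite E \<and> (\<forall>e\<in>E. src e \<in> V \<and> tgt e \<in> V) \<and>
     graph_connected V E src tgt \<and>
     (\<forall>v\<in>V. 2 * int (w v) - 2 + int (deg_in E src tgt v) > 0) \<and>
     (\<forall>e\<in>E. l e > 0)"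

text \<open>Points of the metric space Gamma: vertices, and interior points of edges
  (Pt e t is the point of e at distance t from src e, 0 < t < l e).\<close>

datatype ('v, 'e) tpoint = Vtx 'v | Pt 'e real

definition tpoints :: "'v set \<Rightarrow> 'e set \<Rightarrow> ('e \<Rightarrow> real) \<Rightarrow> ('v, 'e) tpoint set" where
  "tpoints V E l = Vtx ` V \<union> {Pt e t | e t. e \<in> E \<and> 0 < t \<and> t < l e}"

definition midpoint_of :: "('e \<Rightarrow> real) \<Rightarrow> 'e \<Rightarrow> ('v, 'e) tpoint" where
  "midpoint_of l e = Pt e (l e / 2)"

definition edge_fun :: "('e \<Rightarrow> 'v) \<Rightarrow> ('e \<Rightarrow> 'v) \<Rightarrow> ('e \<Rightarrow> real) \<Rightarrow> (('v, 'e) tpoint \<Rightarrow> real)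
    \<Rightarrow> 'e \<Rightarrow> real \<Rightarrow> real" where
  "edge_fun src tgt l f e t =
     (if t \<le> 0 then f (Vtx (src e)) else if t \<ge> l e then f (Vtx (tgt e)) else f (Pt e t))"

text \<open>Rational functions: continuous, piecewise linear with integer slopes and
  finitely many pieces on every edge.\<close>

definition rational_fun ::
  "'e set \<Rightarrow> ('e \<Rightarrow> 'v) \<Rightarrow> ('e \<Rightarrow> 'v) \<Rightarrow> ('e \<Rightarrow> real) \<Rightarrow> (('v, 'e) tpoint \<Rightarrow> real) \<Rightarrow> bool" where
  "rational_fun E src tgt l f \<longleftrightarrow>
     (\<forall>e\<in>E. \<exists>(a :: nat \<Rightarrow> real) (k :: nat) (s :: nat \<Rightarrow> int).
        a 0 = 0 \<and> a k = l e \<and> (\<forall>i<k. a i < a (Suc i)) \<and>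
        (\<forall>i<k. \<forall>t\<in>{a i..a (Suc i)}.
            edge_fun src tgt l f e t = edge_fun src tgt l f e (a i) + of_int (s i) * (t - a i)))"

definition out_slope :: "(real \<Rightarrow> real) \<Rightarrow> real \<Rightarrow> int" where
  "out_slope g t = (THE s :: int. \<forall>\<^sub>F h in at_right 0. g (t + h) = g t + of_int s * h)"

definition div_fun ::
  "'e set \<Rightarrow> ('e \<Rightarrow> 'v) \<Rightarrow> ('e \<Rightarrow> 'v) \<Rightarrow> ('e \<Rightarrow> real) \<Rightarrow> (('v, 'e) tpoint \<Rightarrow> real)
     \<Rightarrow> ('v, 'e) tpoint \<Rightarrow> int" where
  "div_fun E src tgt l f x =
     (case x of
        Vtx v \<Rightarrow> (\<Sum>e\<in>{e\<in>E. src e = v}. out_slope (edge_fun src tgt l f e) 0)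
               + (\<Sum>e\<in>{e\<in>E. tgt e = v}. out_slope (\<lambda>t. edge_fun src tgt l f e (l e - t)) 0)
      | Pt e t \<Rightarrow> out_slope (edge_fun src tgt l f e) t
               + out_slope (\<lambda>u. edge_fun src tgt l f e (- u)) (- t))"

definition is_divisor :: "'v set \<Rightarrow> 'e set \<Rightarrow> ('e \<Rightarrow> real) \<Rightarrow> (('v, 'e) tpoint \<Rightarrow> int) \<Rightarrow> bool" where
  "is_divisor V E l D \<longleftrightarrow> finite {x. D x \<noteq> 0} \<and> {x. D x \<noteq> 0} \<subseteq> tpoints V E l"

definition effective_on :: "'v set \<Rightarrow> 'e set \<Rightarrow> ('e \<Rightarrow> real) \<Rightarrow> (('v, 'e) tpoint \<Rightarrow> int) \<Rightarrow> bool" where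
  "effective_on V E l D \<longleftrightarrow> (\<forall>x\<in>tpoints V E l. D x \<ge> 0)"

definition lin_equiv ::
  "'v set \<Rightarrow> 'e set \<Rightarrow> ('e \<Rightarrow> 'v) \<Rightarrow> ('e \<Rightarrow> 'v) \<Rightarrow> ('e \<Rightarrow> real)
     \<Rightarrow> (('v, 'e) tpoint \<Rightarrow> int) \<Rightarrow> (('v, 'e) tpoint \<Rightarrow> int) \<Rightarrow> bool" where
  "lin_equiv V E src tgt l D D' \<longleftrightarrow>
     (\<exists>f. rational_fun E src tgt l f \<and>
          (\<forall>x\<in>tpoints V E l. D' x = D x + div_fun E src tgt l f x))"

definition rank_neg1 ::
  "'v set \<Rightarrow> 'e set \<Rightarrow> ('e \<Rightarrow> 'v) \<Rightarrow> ('e \<Rightarrow> 'v) \<Rightarrow> ('e \<Rightarrow> real)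
     \<Rightarrow> (('v, 'e) tpoint \<Rightarrow> int) \<Rightarrow> bool" where
  "rank_neg1 V E src tgt l D \<longleftrightarrow>
     \<not> (\<exists>D'. is_divisor V E l D' \<and> effective_on V E l D' \<and> lin_equiv V E src tgt l D D')"

definition even_subgraph :: "'v set \<Rightarrow> 'e set \<Rightarrow> ('e \<Rightarrow> 'v) \<Rightarrow> ('e \<Rightarrow> 'v) \<Rightarrow> 'e set \<Rightarrow> bool" where
  "even_subgraph V E src tgt P \<longleftrightarrow> P \<subseteq> E \<and> (\<forall>v\<in>V. even (deg_in P src tgt v))"

definition T_div ::
  "'v set \<Rightarrow> 'e set \<Rightarrow> ('e \<Rightarrow> 'v) \<Rightarrow> ('e \<Rightarrow> 'v) \<Rightarrow> ('v \<Rightarrow> nat) \<Rightarrow> ('e \<Rightarrow> real)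
     \<Rightarrow> 'e set \<Rightarrow> ('v, 'e) tpoint \<Rightarrow> int" where
  "T_div V E src tgt w l P x =
     (case x of
        Vtx v \<Rightarrow> (if v \<in> V then int (deg_in P src tgt v div 2) - 1 + int (w v) else 0)
      | Pt e t \<Rightarrow> (if e \<in> E - P \<and> t = l e / 2 then 1 else 0))"

end

theory Submission
  imports Defs
begin

text \<open>
  If \<Gamma> is pure and P = {}, then T_P is -1 at every vertex and +1 at every midpoint. Take a
  rational function f and a point where it is maximal. At a maximal vertex every outgoing slope
  is \<le> 0, so T_P + div f is negative there. Otherwise f is maximal only inside some edge; at the
  first and at the last maximal breakpoint of that edge the slope drops by at least 1, and if
  these breakpoints coincide by at least 2, which a single midpoint chip cannot compensate.

  Conversely, suppose T_P(v0) \<ge> 0 for some vertex v0, which happens unless P = {} and \<Gamma> is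
  pure. Let \<delta> be the distance from v0 when the edges of P have length 0 and every other edge
  half its length. The rational function that is -\<delta> on the vertices and on each edge e moves
  the midpoint chip by \<delta>(src e) - \<delta>(tgt e) towards src e has the property that T_P + div f is
  effective: a vertex v \<noteq> v0 with T_P(v) = -1 lies on no edge of P, and the chip of an edge
  along which the distance of v is attained is moved onto v.
\<close>

section \<open>Slopes of piecewise affine functions\<close>

lemma out_slope_eqI:
  assumes "\<forall>\<^sub>F h in at_right 0. g (t + h) = g t + of_int s * h"
  shows "out_slope g t = s"
  unfolding out_slope_def
proof (rule the_equality)
  fix s' assume s': "\<forall>\<^sub>F h in at_right 0. g (t + h) = g t + of_int s' * h"
  have "\<forall>\<^sub>F h in at_right (0::real). h > 0 \<and> of_int s' * h = of_int s * h"
    using eventually_at_right_less[of 0] s' assms by eventually_elim auto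
  then obtain h :: real where "h > 0" "of_int s' * h = of_int s * h"
    using eventually_happens'[OF trivial_limit_at_right_real] by blast
  then show "s' = s" by simp
qed (rule assms)

lemma out_slope_affine_right:
  assumes "a < b" "\<forall>t\<in>{a..b}. g t = g a + of_int s * (t - a)"
  shows "out_slope g a = s"
proof (rule out_slope_eqI, rule eventually_at_rightI[of 0 "b - a"])
  fix h assume "h \<in> {0<..<b - a}"
  then have "a + h \<in> {a..b}" by auto
  from assms(2)[rule_format, OF this] show "g (a + h) = g a + of_int s * h" by simp
qed (use assms in simp)

lemma out_slope_affine_left:
  assumes "a < b" "\<forall>t\<in>{a..b}. g t = g a + of_int s * (t - a)"
  shows "out_slope (\<lambda>u. g (c - u)) (c - b) = - s"
proof (rule out_slope_eqI, rule eventually_at_rightI[of 0 "b - a"])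
  fix h assume "h \<in> {0<..<b - a}"
  then have "b - h \<in> {a..b}" "b \<in> {a..b}" using assms(1) by auto
  from this[THEN assms(2)[rule_format]]
  show "g (c - (c - b + h)) = g (c - (c - b)) + of_int (- s) * h"
    by (simp add: algebra_simps)
qed (use assms in simp)

definition affine_partition ::
    "real \<Rightarrow> (real \<Rightarrow> real) \<Rightarrow> (nat \<Rightarrow> real) \<Rightarrow> nat \<Rightarrow> (nat \<Rightarrow> int) \<Rightarrow> bool" where
  "affine_partition L g a k s \<longleftrightarrow>
     a 0 = 0 \<and> a k = L \<and> (\<forall>i<k. a i < a (Suc i)) \<and>
     (\<forall>i<k. \<forall>t\<in>{a i..a (Suc i)}. g t = g (a i) + of_int (s i) * (t - a i))"

lemma rational_fun_iff:
  "rational_fun E src tgt l f \<longleftrightarrow>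
     (\<forall>e\<in>E. \<exists>a k s. affine_partition (l e) (edge_fun src tgt l f e) a k s)"
  unfolding rational_fun_def affine_partition_def ..

context
  fixes L g a k s
  assumes part: "affine_partition L g a k s"
begin

lemma affine_partition_0: "a 0 = 0"
  and affine_partition_k: "a k = L"
  and affine_partition_Suc_less: "i < k \<Longrightarrow> a i < a (Suc i)"
  and affine_partition_piece:
    "i < k \<Longrightarrow> \<forall>t\<in>{a i..a (Suc i)}. g t = g (a i) + of_int (s i) * (t - a i)"
  using part unfolding affine_partition_def by blast+

lemma affine_partition_less: "i < j \<Longrightarrow> j \<le> k \<Longrightarrow> a i < a j"
proof (induction j)
  case (Suc j)
  then show ?case using affine_partition_Suc_less[of j] by (cases "i = j") auto
qed simp

lemma affine_partition_pos: "0 < L \<Longrightarrow> 0 < k"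
  using affine_partition_0 affine_partition_k by (cases k) auto

lemma affine_partition_out_slope: "i < k \<Longrightarrow> out_slope g (a i) = s i"
  by (rule out_slope_affine_right[OF affine_partition_less affine_partition_piece]) auto

lemma affine_partition_in_slope:
  "i < k \<Longrightarrow> out_slope (\<lambda>u. g (c - u)) (c - a (Suc i)) = - s i"
  by (rule out_slope_affine_left[OF affine_partition_less affine_partition_piece]) auto

lemma affine_partition_slope_sign:
  assumes "i < k"
  shows "0 < s i \<longleftrightarrow> g (a i) < g (a (Suc i))" and "s i < 0 \<longleftrightarrow> g (a (Suc i)) < g (a i)"
proof -
  have d: "0 < a (Suc i) - a i" using affine_partition_Suc_less[OF assms] by simp
  have eq: "of_int (s i) * (a (Suc i) - a i) = g (a (Suc i)) - g (a i)"
    using affine_partition_piece[OF assms, rule_format, of "a (Suc i)"] d by simp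
  have "0 < s i \<longleftrightarrow> 0 < of_int (s i) * (a (Suc i) - a i)"
    using d by (simp add: zero_less_mult_iff)
  then show "0 < s i \<longleftrightarrow> g (a i) < g (a (Suc i))" unfolding eq by simp
  have "s i < 0 \<longleftrightarrow> of_int (s i) * (a (Suc i) - a i) < 0"
    using d by (simp add: mult_less_0_iff)
  then show "s i < 0 \<longleftrightarrow> g (a (Suc i)) < g (a i)" unfolding eq by simp
qed

lemma affine_partition_first_last_max:
  assumes le_M: "\<forall>i\<le>k. g (a i) \<le> M" and ends: "g (a 0) < M" "g (a k) < M"
    and hit: "i \<le> k" "g (a i) = M"
  shows "\<exists>j0 j1. 0 < j0 \<and> j0 \<le> j1 \<and> j1 < k \<and> g (a j0) = M \<and> g (a j1) = M \<and>
    0 < s (j0 - 1) \<and> s j0 \<le> 0 \<and> 0 \<le> s (j1 - 1) \<and> s j1 < 0"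
proof -
  define J where "J = {j. j \<le> k \<and> g (a j) = M}"
  have "finite J" "i \<in> J" using hit by (auto simp: J_def)
  define j0 j1 where "j0 = Min J" and "j1 = Max J"
  have J: "j0 \<in> J" "j1 \<in> J" "j0 \<le> j1"
    using \<open>finite J\<close> \<open>i \<in> J\<close> unfolding j0_def j1_def
    by (auto intro: Min_in Max_in Min_le order.trans[OF _ Max_ge])
  have inner: "0 < j \<and> j < k" if "j \<in> J" for j
    using that ends unfolding J_def by (cases "j = 0"; cases "j = k") auto
  have "j0 - 1 \<notin> J"
    using inner[OF J(1)] Min_le[OF \<open>finite J\<close>, of "j0 - 1"] unfolding j0_def by linarith
  moreover have "Suc j1 \<notin> J"
    using Max_ge[OF \<open>finite J\<close>, of "Suc j1"] unfolding j1_def by linarith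
  ultimately have "g (a (j0 - 1)) < M" "g (a (Suc j1)) < M"
    using le_M[rule_format, of "j0 - 1"] le_M[rule_format, of "Suc j1"]
      inner[OF J(1)] inner[OF J(2)]
    unfolding J_def by fastforce+
  moreover have "g (a j0) = M" "g (a j1) = M" using J unfolding J_def by auto
  moreover have "g (a (Suc j0)) \<le> M" "g (a (j1 - 1)) \<le> M"
    using le_M[rule_format, of "Suc j0"] le_M[rule_format, of "j1 - 1"]
      inner[OF J(1)] inner[OF J(2)]
    by auto
  moreover have "Suc (j0 - 1) = j0" "Suc (j1 - 1) = j1" "j0 - 1 < k" "j1 - 1 < k"
    using inner[OF J(1)] inner[OF J(2)] by auto
  ultimately have "0 < s (j0 - 1)" "s j0 \<le> 0" "s j1 < 0" "0 \<le> s (j1 - 1)"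
    using affine_partition_slope_sign(1)[of "j0 - 1"] affine_partition_slope_sign(1)[of j0]
      affine_partition_slope_sign(2)[of j1] affine_partition_slope_sign(2)[of "j1 - 1"]
      inner[OF J(1)] inner[OF J(2)]
    by (simp_all add: not_less[symmetric])
  with J(3) inner[OF J(1)] inner[OF J(2)] \<open>g (a j0) = M\<close> \<open>g (a j1) = M\<close> show ?thesis by blast
qed

lemma affine_partition_max_breakpoint:
  assumes "\<forall>i\<le>k. g (a i) \<le> M" "g (a 0) < M" "g (a k) < M" "i \<le> k" "g (a i) = M"
  shows "\<exists>j. 0 < j \<and> j < k \<and> g (a j) = M \<and> s j - s (j - 1) \<le> -1 \<and>
             (a j = m \<longrightarrow> s j - s (j - 1) \<le> -2)"
proof -
  obtain j0 j1 where j: "0 < j0" "j0 \<le> j1" "j1 < k" "g (a j0) = M" "g (a j1) = M"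
    and s: "0 < s (j0 - 1)" "s j0 \<le> 0" "0 \<le> s (j1 - 1)" "s j1 < 0"
    using affine_partition_first_last_max[OF assms] by blast
  consider "a j0 \<noteq> m" | "j0 = j1" | "a j0 = m" "j0 < j1" using j(2) by fastforce
  then show ?thesis
  proof cases
    case 3
    then have "a j1 \<noteq> m" using affine_partition_less[of j0 j1] j(3) by simp
    with j s show ?thesis by (intro exI[of _ j1]) auto
  qed (use j s in \<open>auto intro!: exI[of _ j0]\<close>)
qed

end

section \<open>The pure case with P empty\<close>

lemma edge_fun_0: "edge_fun src tgt l f e 0 = f (Vtx (src e))"
  by (simp add: edge_fun_def)

lemma edge_fun_length: "0 < l e \<Longrightarrow> edge_fun src tgt l f e (l e) = f (Vtx (tgt e))"
  by (simp add: edge_fun_def)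

context
  fixes E :: "'e set" and src tgt :: "'e \<Rightarrow> 'v" and l :: "'e \<Rightarrow> real"
    and f :: "('v, 'e) tpoint \<Rightarrow> real"
    and A :: "'e \<Rightarrow> nat \<Rightarrow> real" and K :: "'e \<Rightarrow> nat" and S :: "'e \<Rightarrow> nat \<Rightarrow> int"
  assumes lpos: "\<forall>e\<in>E. 0 < l e"
    and part: "\<forall>e\<in>E. affine_partition (l e) (edge_fun src tgt l f e) (A e) (K e) (S e)"
begin

lemma div_fun_Vtx_nonpos_at_max:
  assumes max: "\<forall>e\<in>E. \<forall>i\<le>K e. edge_fun src tgt l f e (A e i) \<le> f (Vtx v)"
  shows "div_fun E src tgt l f (Vtx v) \<le> 0"
proof -
  let ?g = "edge_fun src tgt l f"
  have out: "out_slope (?g e) 0 \<le> 0" if "e \<in> E" "src e = v" for e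
  proof -
    note pe = part[rule_format, OF \<open>e \<in> E\<close>]
    have k: "0 < K e" using affine_partition_pos[OF pe] lpos that by blast
    have "?g e (A e 1) \<le> ?g e (A e 0)"
      using max[rule_format, OF \<open>e \<in> E\<close>, of 1] k that affine_partition_0[OF pe]
      by (simp add: edge_fun_0)
    then show ?thesis
      using affine_partition_out_slope[OF pe k] affine_partition_slope_sign(1)[OF pe k]
        affine_partition_0[OF pe] by simp
  qed
  have into: "out_slope (\<lambda>t. ?g e (l e - t)) 0 \<le> 0" if "e \<in> E" "tgt e = v" for e
  proof -
    note pe = part[rule_format, OF \<open>e \<in> E\<close>]
    have k: "K e - 1 < K e" "Suc (K e - 1) = K e"
      using affine_partition_pos[OF pe] lpos that by auto
    have "?g e (A e (K e - 1)) \<le> ?g e (A e (K e))"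
      using max[rule_format, OF \<open>e \<in> E\<close>, of "K e - 1"] lpos that affine_partition_k[OF pe]
      by (simp add: edge_fun_length)
    then show ?thesis
      using affine_partition_in_slope[OF pe k(1), of "l e"]
        affine_partition_slope_sign(2)[OF pe k(1)]
        affine_partition_k[OF pe] k(2) by simp
  qed
  have "(\<Sum>e\<in>{e\<in>E. src e = v}. out_slope (?g e) 0) \<le> 0"
    using out by (intro sum_nonpos) auto
  moreover have "(\<Sum>e\<in>{e\<in>E. tgt e = v}. out_slope (\<lambda>t. ?g e (l e - t)) 0) \<le> 0"
    using into by (intro sum_nonpos) auto
  ultimately show ?thesis unfolding div_fun_def by simp
qed

lemma div_fun_Pt_breakpoint:
  assumes "e \<in> E" "0 < j" "j < K e"
  shows "div_fun E src tgt l f (Pt e (A e j)) = S e j - S e (j - 1)"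
proof -
  note pe = part[rule_format, OF \<open>e \<in> E\<close>]
  have "j - 1 < K e" "Suc (j - 1) = j" using assms by auto
  then show ?thesis
    using affine_partition_out_slope[OF pe \<open>j < K e\<close>] affine_partition_in_slope[OF pe, of "j - 1" 0]
    by (simp add: div_fun_def)
qed

lemma breakpoint_in_tpoints:
  assumes "e \<in> E" "0 < j" "j < K e"
  shows "Pt e (A e j) \<in> tpoints V E l"
proof -
  note pe = part[rule_format, OF \<open>e \<in> E\<close>]
  have "A e 0 < A e j" "A e j < A e (K e)"
    using affine_partition_less[OF pe] assms by auto
  then show ?thesis
    using affine_partition_0[OF pe] affine_partition_k[OF pe] \<open>e \<in> E\<close> by (auto simp: tpoints_def)
qed

lemma exists_negative_point_at_edge_max:
  assumes "e \<in> E" and le_M: "\<forall>i\<le>K e. edge_fun src tgt l f e (A e i) \<le> M"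
    and ends: "f (Vtx (src e)) < M" "f (Vtx (tgt e)) < M"
    and hit: "i \<le> K e" "edge_fun src tgt l f e (A e i) = M"
  shows "\<exists>x\<in>tpoints V E l. T_div V E src tgt w l {} x + div_fun E src tgt l f x < 0"
proof -
  note pe = part[rule_format, OF \<open>e \<in> E\<close>]
  have "edge_fun src tgt l f e (A e 0) < M" "edge_fun src tgt l f e (A e (K e)) < M"
    using ends lpos \<open>e \<in> E\<close> affine_partition_0[OF pe] affine_partition_k[OF pe]
    by (simp_all add: edge_fun_0 edge_fun_length)
  then obtain j where j: "0 < j" "j < K e" "S e j - S e (j - 1) \<le> -1"
      "A e j = l e / 2 \<longrightarrow> S e j - S e (j - 1) \<le> -2"
    using affine_partition_max_breakpoint[OF pe le_M _ _ hit, where m = "l e / 2"] by blast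
  have "T_div V E src tgt w l {} (Pt e (A e j)) = (if A e j = l e / 2 then 1 else 0)"
    using \<open>e \<in> E\<close> by (simp add: T_div_def)
  then have "T_div V E src tgt w l {} (Pt e (A e j)) + div_fun E src tgt l f (Pt e (A e j)) < 0"
    using j div_fun_Pt_breakpoint[OF \<open>e \<in> E\<close> j(1,2)] by auto
  then show ?thesis using breakpoint_in_tpoints[OF \<open>e \<in> E\<close> j(1,2)] by blast
qed

lemma exists_negative_point_T_div_empty:
  assumes finV: "finite V" "V \<noteq> {}" and finE: "finite E"
    and ends: "\<forall>e\<in>E. src e \<in> V \<and> tgt e \<in> V" and pure: "\<forall>v\<in>V. w v = 0"
  shows "\<exists>x\<in>tpoints V E l. T_div V E src tgt w l {} x + div_fun E src tgt l f x < 0"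
proof -
  let ?g = "edge_fun src tgt l f"
  let ?values = "(\<lambda>v. f (Vtx v)) ` V \<union> (\<Union>e\<in>E. (\<lambda>i. ?g e (A e i)) ` {..K e})"
  define M where "M = Max ?values"
  have fin: "finite ?values" using finV finE by simp
  have vertex_le: "f (Vtx v) \<le> M" if "v \<in> V" for v
    unfolding M_def using fin that by (intro Max_ge) auto
  have edge_le: "\<forall>e\<in>E. \<forall>i\<le>K e. ?g e (A e i) \<le> M"
    unfolding M_def using fin by (auto intro: Max_ge)
  have "M \<in> ?values" unfolding M_def using fin finV(2) by (intro Max_in) auto
  then have "(\<exists>v\<in>V. f (Vtx v) = M) \<or> (\<exists>e\<in>E. \<exists>i\<le>K e. ?g e (A e i) = M)" by auto
  then consider (vertex) v where "v \<in> V" "f (Vtx v) = M"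
    | (edge) e i where "e \<in> E" "i \<le> K e" "?g e (A e i) = M" "\<forall>v\<in>V. f (Vtx v) < M"
    using vertex_le order_le_less by blast
  then show ?thesis
  proof cases
    case vertex
    then have "div_fun E src tgt l f (Vtx v) \<le> 0"
      using edge_le by (intro div_fun_Vtx_nonpos_at_max) simp
    moreover have "T_div V E src tgt w l {} (Vtx v) = -1"
      using vertex pure by (simp add: T_div_def deg_in_def)
    ultimately show ?thesis using vertex by (intro bexI[of _ "Vtx v"]) (auto simp: tpoints_def)
  next
    case edge
    then show ?thesis
      using ends edge_le by (intro exists_negative_point_at_edge_max[of e M i]) auto
  qed
qed

end

section \<open>Ramp functions\<close>

definition ramp :: "real \<Rightarrow> real" where
  "ramp x = max 0 x"

lemma ramp_right_linear:
  "\<forall>\<^sub>F h in at_right 0. ramp (t + h - b) = ramp (t - b) + (if b \<le> t then 1 else 0) * h"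
proof (cases "b \<le> t")
  case True
  show ?thesis
    using eventually_at_right_less[of 0] by eventually_elim (use True in \<open>simp add: ramp_def\<close>)
next
  case False
  then show ?thesis by (intro eventually_at_rightI[of 0 "b - t"]) (auto simp: ramp_def)
qed

lemma ramp_left_linear:
  "\<forall>\<^sub>F h in at_right 0. ramp (t - h - b) = ramp (t - b) - (if b < t then 1 else 0) * h"
proof (cases "b < t")
  case True
  then show ?thesis by (intro eventually_at_rightI[of 0 "t - b"]) (auto simp: ramp_def)
next
  case False
  show ?thesis
    using eventually_at_right_less[of 0] by eventually_elim (use False in \<open>simp add: ramp_def\<close>)
qed

lemma ramp_diff_no_kink:
  "a \<le> t \<Longrightarrow> b \<le> a \<or> t \<le> b \<Longrightarrow> ramp (t - b) - ramp (a - b) = (if b \<le> a then t - a else 0)"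
  by (auto simp: ramp_def)

lemma out_slope_agree_right:
  assumes "\<forall>u\<in>{0..L}. g u = G u" "0 \<le> t" "t < L"
    and "\<forall>\<^sub>F h in at_right 0. G (t + h) = G t + of_int s * h"
  shows "out_slope g t = s"
proof (rule out_slope_eqI)
  have "\<forall>\<^sub>F h in at_right 0. h \<in> {0<..<L - t}"
    using assms(3) by (intro eventually_at_right_real) simp
  with assms(4) show "\<forall>\<^sub>F h in at_right 0. g (t + h) = g t + of_int s * h"
  proof eventually_elim
    case (elim h)
    then have "t + h \<in> {0..L}" "t \<in> {0..L}" using assms(2,3) by auto
    with elim(1) assms(1) show ?case by simp
  qed
qed

lemma out_slope_agree_left:
  assumes "\<forall>u\<in>{0..L}. g u = G u" "0 < t" "t \<le> L"
    and "\<forall>\<^sub>F h in at_right 0. G (t - h) = G t - of_int s * h"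
  shows "out_slope (\<lambda>u. g (c - u)) (c - t) = - s"
proof (rule out_slope_eqI)
  from assms(4) eventually_at_right_real[OF assms(2)]
  show "\<forall>\<^sub>F h in at_right 0. g (c - (c - t + h)) = g (c - (c - t)) + of_int (- s) * h"
  proof eventually_elim
    case (elim h)
    then have "t - h \<in> {0..L}" "t \<in> {0..L}" using assms(2,3) by auto
    with elim(1) assms(1) show ?case by simp
  qed
qed

lemma sorted_partition_exists:
  fixes B :: "real set"
  assumes fin: "finite B" and sub: "B \<subseteq> {0..L}" and "0 \<in> B" "L \<in> B"
  shows "\<exists>a k. a 0 = 0 \<and> a k = L \<and> (\<forall>i<k. a i < a (Suc i)) \<and>
     (\<forall>i<k. \<forall>b\<in>B. b \<le> a i \<or> a (Suc i) \<le> b) \<and> (\<forall>i\<le>k. a i \<in> B)"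
proof -
  define xs where "xs = sorted_list_of_set B"
  have set_xs: "set xs = B" and sorted: "sorted_wrt (<) xs" using fin by (simp_all add: xs_def)
  have lt: "xs ! i < xs ! j" if "i < j" "j < length xs" for i j
    using sorted_wrt_nth_less[OF sorted that] .
  have le: "xs ! i \<le> xs ! j" if "i \<le> j" "j < length xs" for i j
    using lt[of i j] that by (cases "i = j") auto
  have idx: "\<exists>j<length xs. xs ! j = b" if "b \<in> B" for b
    using that set_xs by (metis in_set_conv_nth)
  have range: "xs ! j \<in> {0..L}" if "j < length xs" for j
    using nth_mem[OF that] set_xs sub by blast
  define k where "k = length xs - 1"
  have k: "k < length xs" using set_xs \<open>0 \<in> B\<close> by (cases xs) (auto simp: k_def)
  obtain j0 where j0: "j0 < length xs" "xs ! j0 = 0" using idx[OF \<open>0 \<in> B\<close>] by blast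
  obtain jL where jL: "jL < length xs" "xs ! jL = L" using idx[OF \<open>L \<in> B\<close>] by blast
  have "xs ! 0 = 0" using le[of 0 j0] range[of 0] j0 by fastforce
  moreover have "xs ! k = L" using le[of jL k] range[of k] jL k by (fastforce simp: k_def)
  moreover have "b \<le> xs ! i \<or> xs ! Suc i \<le> b" if i: "i < k" and b: "b \<in> B" for i b
  proof -
    obtain j where "j < length xs" "xs ! j = b" using idx[OF b] by blast
    then show ?thesis using le[of j i] le[of "Suc i" j] i k by (cases "j \<le> i") auto
  qed
  ultimately show ?thesis
    using lt k set_xs by (intro exI[of _ "(!) xs"] exI[of _ k]) auto
qed

lemma ramp_pair_affine_partition:
  assumes agree: "\<forall>t\<in>{0..L}. g t = c + ramp (t - b) - ramp (t - m)"
    and "b \<in> {0..L}" "m \<in> {0..L}"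
  shows "\<exists>a k s. affine_partition L g a k s"
proof -
  have "finite {0, b, m, L}" "{0, b, m, L} \<subseteq> {0..L}" "0 \<in> {0, b, m, L}" "L \<in> {0, b, m, L}"
    using assms(2,3) by auto
  from sorted_partition_exists[OF this] obtain a k where a: "a 0 = 0" "a k = L"
    "\<forall>i<k. a i < a (Suc i)" "\<forall>i<k. \<forall>x\<in>{0, b, m, L}. x \<le> a i \<or> a (Suc i) \<le> x"
    "\<forall>i\<le>k. a i \<in> {0, b, m, L}" by blast
  define s where "s i = (if b \<le> a i then 1 else 0) - (if m \<le> a i then 1 else (0::int))" for i
  have "g t = g (a i) + of_int (s i) * (t - a i)"
    if i: "i < k" and t: "t \<in> {a i..a (Suc i)}" for i t
  proof -
    have "a i \<in> {0, b, m, L}" "a (Suc i) \<in> {0, b, m, L}" using a(5) i by auto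
    then have range: "a i \<in> {0..L}" "a (Suc i) \<in> {0..L}" using \<open>{0, b, m, L} \<subseteq> {0..L}\<close> by blast+
    have "b \<le> a i \<or> a (Suc i) \<le> b" "m \<le> a i \<or> a (Suc i) \<le> m" using a(4) i by blast+
    then have "b \<le> a i \<or> t \<le> b" "m \<le> a i \<or> t \<le> m" using t by auto
    then have "ramp (t - b) - ramp (a i - b) = (if b \<le> a i then t - a i else 0)"
      "ramp (t - m) - ramp (a i - m) = (if m \<le> a i then t - a i else 0)"
      using t by (simp_all add: ramp_diff_no_kink)
    moreover have "t \<in> {0..L}" using range t by auto
    then have "g t = c + ramp (t - b) - ramp (t - m)"
      "g (a i) = c + ramp (a i - b) - ramp (a i - m)"
      using agree range by blast+
    ultimately show ?thesis by (cases "b \<le> a i"; cases "m \<le> a i") (simp_all add: s_def)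
  qed
  then show ?thesis using a(1-3) unfolding affine_partition_def by blast
qed

section \<open>Shortest-path potentials\<close>

definition joins :: "'e set \<Rightarrow> ('e \<Rightarrow> 'v) \<Rightarrow> ('e \<Rightarrow> 'v) \<Rightarrow> 'e \<Rightarrow> 'v \<Rightarrow> 'v \<Rightarrow> bool" where
  "joins E src tgt e p q \<longleftrightarrow> e \<in> E \<and> (src e = p \<and> tgt e = q \<or> src e = q \<and> tgt e = p)"

lemma graph_connected_crossing:
  assumes "graph_connected V E src tgt" "x \<in> S" "S \<subseteq> V" "y \<in> V" "y \<notin> S"
  shows "\<exists>e p q. joins E src tgt e p q \<and> p \<in> S \<and> q \<notin> S"
proof -
  have "{(src e, tgt e) | e. e \<in> E} \<union> {(tgt e, src e) | e. e \<in> E} =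
      {(p, q). \<exists>e. joins E src tgt e p q}"
    unfolding joins_def by blast
  with assms(1) have "\<forall>u\<in>V. \<forall>v\<in>V. (u, v) \<in> {(p, q). \<exists>e. joins E src tgt e p q}\<^sup>*"
    unfolding graph_connected_def by simp
  then have "(x, y) \<in> {(p, q). \<exists>e. joins E src tgt e p q}\<^sup>*"
    using assms(2-4) by blast
  then show ?thesis using assms(2,5) by induction auto
qed

text \<open>Invariant of Dijkstra's algorithm from v0 with edge lengths c and settled set S.\<close>

definition dijkstra_inv ::
    "'e set \<Rightarrow> ('e \<Rightarrow> 'v) \<Rightarrow> ('e \<Rightarrow> 'v) \<Rightarrow> ('e \<Rightarrow> real) \<Rightarrow> 'v \<Rightarrow> 'v set \<Rightarrow> ('v \<Rightarrow> real) \<Rightarrow> bool" where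
  "dijkstra_inv E src tgt c v0 S \<delta> \<longleftrightarrow> v0 \<in> S \<and>
     (\<forall>e p q. joins E src tgt e p q \<longrightarrow> p \<in> S \<longrightarrow> q \<in> S \<longrightarrow> \<delta> q \<le> \<delta> p + c e) \<and>
     (\<forall>q\<in>S - {v0}. \<exists>e p. joins E src tgt e p q \<and> p \<in> S \<and> \<delta> q = \<delta> p + c e) \<and>
     (\<forall>e p q z. joins E src tgt e p q \<longrightarrow> p \<in> S \<longrightarrow> q \<notin> S \<longrightarrow> z \<in> S \<longrightarrow> \<delta> z \<le> \<delta> p + c e)"

lemma dijkstra_inv_insert:
  assumes inv: "dijkstra_inv E src tgt c v0 S \<delta>" and c: "\<forall>e\<in>E. 0 \<le> c e"
    and e0: "joins E src tgt e0 u x" "u \<in> S" "x \<notin> S"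
    and min: "\<forall>e p q. joins E src tgt e p q \<longrightarrow> p \<in> S \<longrightarrow> q \<notin> S \<longrightarrow> \<delta> u + c e0 \<le> \<delta> p + c e"
  shows "dijkstra_inv E src tgt c v0 (insert x S) (\<delta>(x := \<delta> u + c e0))"
proof -
  define m where "m = \<delta> u + c e0"
  let ?\<delta> = "\<delta>(x := m)"
  from inv have v0: "v0 \<in> S"
    and lip: "\<And>e p q. joins E src tgt e p q \<Longrightarrow> p \<in> S \<Longrightarrow> q \<in> S \<Longrightarrow> \<delta> q \<le> \<delta> p + c e"
    and tight: "\<And>q. q \<in> S - {v0} \<Longrightarrow> \<exists>e p. joins E src tgt e p q \<and> p \<in> S \<and> \<delta> q = \<delta> p + c e"
    and bound: "\<And>e p q z. joins E src tgt e p q \<Longrightarrow> p \<in> S \<Longrightarrow> q \<notin> S \<Longrightarrow> z \<in> S \<Longrightarrow> \<delta> z \<le> \<delta> p + c e"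
    unfolding dijkstra_inv_def by blast+
  have c_joins: "0 \<le> c e" if "joins E src tgt e p q" for e p q
    using that c by (simp add: joins_def)
  have min': "m \<le> \<delta> p + c e" if "joins E src tgt e p q" "p \<in> S" "q \<notin> S" for e p q
    using min that unfolding m_def by blast
  have below_m: "?\<delta> z \<le> m" if "z \<in> insert x S" for z
    using that bound[OF e0(1,2,3)] e0(3) unfolding m_def by auto
  have "?\<delta> q \<le> ?\<delta> p + c e"
    if "joins E src tgt e p q" "p \<in> insert x S" "q \<in> insert x S" for e p q
    using that below_m[of q] c_joins[OF that(1)] min'[OF that(1)] lip[OF that(1)] e0(3) by auto
  moreover have "\<exists>e p. joins E src tgt e p q \<and> p \<in> insert x S \<and> ?\<delta> q = ?\<delta> p + c e"
    if "q \<in> insert x S - {v0}" for q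
  proof (cases "q = x")
    case True
    then show ?thesis using e0 unfolding m_def by (intro exI[of _ e0] exI[of _ u]) auto
  next
    case False
    with that tight[of q] e0(3) show ?thesis by fastforce
  qed
  moreover have "?\<delta> z \<le> ?\<delta> p + c e"
    if "joins E src tgt e p q" "p \<in> insert x S" "q \<notin> insert x S" "z \<in> insert x S" for e p q z
    using that below_m[OF that(4)] c_joins[OF that(1)] min'[OF that(1)] e0(3) by auto
  ultimately show ?thesis using v0 unfolding dijkstra_inv_def m_def by blast
qed

lemma dijkstra_inv_extend:
  assumes inv: "dijkstra_inv E src tgt c v0 S \<delta>" and c: "\<forall>e\<in>E. 0 \<le> c e"
    and finE: "finite E" and cross: "joins E src tgt e1 p1 q1" "p1 \<in> S" "q1 \<notin> S"
  shows "\<exists>e u x \<delta>'. joins E src tgt e u x \<and> x \<notin> S \<and> dijkstra_inv E src tgt c v0 (insert x S) \<delta>'"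
proof -
  define C where "C = {(e, p, q). joins E src tgt e p q \<and> p \<in> S \<and> q \<notin> S}"
  have "C \<subseteq> (\<lambda>e. (e, src e, tgt e)) ` E \<union> (\<lambda>e. (e, tgt e, src e)) ` E"
    unfolding C_def joins_def by auto
  then have "finite C" by (rule finite_subset) (simp add: finE)
  moreover have "(e1, p1, q1) \<in> C" using cross unfolding C_def by simp
  then have "C \<noteq> {}" by blast
  define t0 where "t0 = arg_min_on (\<lambda>(e, p, q). \<delta> p + c e) C"
  obtain e0 u x where t0: "t0 = (e0, u, x)" by (cases t0)
  have "(e0, u, x) \<in> C" "\<forall>(e, p, q)\<in>C. \<delta> u + c e0 \<le> \<delta> p + c e"
    using arg_min_if_finite[OF \<open>finite C\<close> \<open>C \<noteq> {}\<close>, of "\<lambda>(e, p, q). \<delta> p + c e"]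
    unfolding t0_def[symmetric] t0 by (auto simp: not_less)
  then show ?thesis unfolding C_def using dijkstra_inv_insert[OF inv c] by blast
qed

lemma tight_potential_exists:
  fixes c :: "'e \<Rightarrow> real"
  assumes finV: "finite V" and finE: "finite E" and ends: "\<forall>e\<in>E. src e \<in> V \<and> tgt e \<in> V"
    and conn: "graph_connected V E src tgt" and v0: "v0 \<in> V" and c: "\<forall>e\<in>E. 0 \<le> c e"
  shows "\<exists>\<delta>. (\<forall>e p q. joins E src tgt e p q \<longrightarrow> \<delta> q \<le> \<delta> p + c e) \<and>
             (\<forall>q\<in>V - {v0}. \<exists>e p. joins E src tgt e p q \<and> \<delta> q = \<delta> p + c e)"
proof -
  have "\<exists>\<delta>. dijkstra_inv E src tgt c v0 V \<delta>"
    if "dijkstra_inv E src tgt c v0 S \<delta>" "S \<subseteq> V" "card (V - S) = n" for n S \<delta>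
    using that
  proof (induction n arbitrary: S \<delta>)
    case 0
    then have "S = V" using finV by auto
    with 0 show ?case by blast
  next
    case (Suc n)
    then obtain y where "y \<in> V" "y \<notin> S" by (metis Diff_eq_empty_iff card_0_eq finV finite_Diff
          nat.distinct(1) subsetI)
    moreover have "v0 \<in> S" using Suc.prems(1) unfolding dijkstra_inv_def by blast
    ultimately obtain e p q where "joins E src tgt e p q" "p \<in> S" "q \<notin> S"
      using graph_connected_crossing[OF conn _ Suc.prems(2)] by blast
    then obtain e u x \<delta>' where x: "joins E src tgt e u x" "x \<notin> S"
        "dijkstra_inv E src tgt c v0 (insert x S) \<delta>'"
      using dijkstra_inv_extend[OF Suc.prems(1) c finE] by blast
    have "x \<in> V" using x(1) ends by (auto simp: joins_def)
    then have "card (V - insert x S) = n" using Suc.prems(3) x(2) finV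
      by (metis Diff_insert card_Diff_singleton diff_Suc_1 finite_Diff DiffI)
    then show ?case using Suc.IH[OF x(3)] Suc.prems(2) \<open>x \<in> V\<close> by blast
  qed
  moreover have "dijkstra_inv E src tgt c v0 {v0} (\<lambda>_. 0)"
    using c by (auto simp: dijkstra_inv_def joins_def)
  ultimately obtain \<delta> where "dijkstra_inv E src tgt c v0 V \<delta>" using v0 by blast
  moreover have "joins E src tgt e p q \<Longrightarrow> p \<in> V \<and> q \<in> V" for e p q
    using ends by (auto simp: joins_def)
  ultimately show ?thesis unfolding dijkstra_inv_def by meson
qed

section \<open>Effective representatives of T_P\<close>

text \<open>The divisor of potential_fun moves the midpoint chip of e to chip_shift e, which is chosen
  so that the value -\<delta> (src e) + l e / 2 - chip_shift e at the end of e is -\<delta> (tgt e).\<close>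

definition chip_shift :: "('e \<Rightarrow> 'v) \<Rightarrow> ('e \<Rightarrow> 'v) \<Rightarrow> ('e \<Rightarrow> real) \<Rightarrow> ('v \<Rightarrow> real) \<Rightarrow> 'e \<Rightarrow> real" where
  "chip_shift src tgt l \<delta> e = l e / 2 - \<delta> (src e) + \<delta> (tgt e)"

definition potential_fun ::
    "('e \<Rightarrow> 'v) \<Rightarrow> ('e \<Rightarrow> 'v) \<Rightarrow> ('e \<Rightarrow> real) \<Rightarrow> ('v \<Rightarrow> real) \<Rightarrow> ('v, 'e) tpoint \<Rightarrow> real" where
  "potential_fun src tgt l \<delta> x = (case x of
     Vtx v \<Rightarrow> - \<delta> v
   | Pt e t \<Rightarrow> - \<delta> (src e) + ramp (t - chip_shift src tgt l \<delta> e) - ramp (t - l e / 2))"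

context
  fixes E :: "'e set" and src tgt :: "'e \<Rightarrow> 'v" and l :: "'e \<Rightarrow> real" and \<delta> :: "'v \<Rightarrow> real"
  assumes lpos: "\<forall>e\<in>E. 0 < l e"
    and lip: "\<forall>e\<in>E. \<bar>\<delta> (src e) - \<delta> (tgt e)\<bar> \<le> l e / 2"
begin

lemma chip_shift_range:
  assumes "e \<in> E"
  shows "chip_shift src tgt l \<delta> e \<in> {0..l e}"
  using lip[rule_format, OF assms] unfolding chip_shift_def atLeastAtMost_iff by arith

lemma edge_fun_potential_fun:
  assumes "e \<in> E" "t \<in> {0..l e}"
  shows "edge_fun src tgt l (potential_fun src tgt l \<delta>) e t =
    - \<delta> (src e) + ramp (t - chip_shift src tgt l \<delta> e) - ramp (t - l e / 2)"
  using assms lpos chip_shift_range[OF assms(1)]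
  by (auto simp: edge_fun_def potential_fun_def ramp_def chip_shift_def)

lemma rational_fun_potential_fun: "rational_fun E src tgt l (potential_fun src tgt l \<delta>)"
  unfolding rational_fun_iff
proof
  fix e assume "e \<in> E"
  then have "l e / 2 \<in> {0..l e}" using lpos by auto
  with \<open>e \<in> E\<close>
  show "\<exists>a k s. affine_partition (l e) (edge_fun src tgt l (potential_fun src tgt l \<delta>) e) a k s"
    by (intro ramp_pair_affine_partition[OF ballI[OF edge_fun_potential_fun]] chip_shift_range)
qed

lemma potential_fun_out_slope:
  assumes "e \<in> E" "0 \<le> t" "t < l e"
  shows "out_slope (edge_fun src tgt l (potential_fun src tgt l \<delta>) e) t =
    (if chip_shift src tgt l \<delta> e \<le> t then 1 else 0) - (if l e / 2 \<le> t then 1 else 0)"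
proof (rule out_slope_agree_right[where L = "l e"])
  let ?b = "chip_shift src tgt l \<delta> e" and ?m = "l e / 2"
  show "\<forall>u\<in>{0..l e}. edge_fun src tgt l (potential_fun src tgt l \<delta>) e u =
      - \<delta> (src e) + ramp (u - ?b) - ramp (u - ?m)"
    using edge_fun_potential_fun[OF assms(1)] by blast
  show "\<forall>\<^sub>F h in at_right 0. - \<delta> (src e) + ramp (t + h - ?b) - ramp (t + h - ?m) =
      - \<delta> (src e) + ramp (t - ?b) - ramp (t - ?m) +
      of_int ((if ?b \<le> t then 1 else 0) - (if ?m \<le> t then 1 else 0)) * h"
    using ramp_right_linear[of t ?b] ramp_right_linear[of t ?m]
    by eventually_elim (cases "?b \<le> t"; cases "?m \<le> t"; simp add: algebra_simps)
qed (use assms in auto)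

lemma potential_fun_in_slope:
  assumes "e \<in> E" "0 < t" "t \<le> l e"
  shows "out_slope (\<lambda>u. edge_fun src tgt l (potential_fun src tgt l \<delta>) e (c - u)) (c - t) =
    (if l e / 2 < t then 1 else 0) - (if chip_shift src tgt l \<delta> e < t then 1 else 0)"
proof -
  let ?b = "chip_shift src tgt l \<delta> e" and ?m = "l e / 2"
  have "out_slope (\<lambda>u. edge_fun src tgt l (potential_fun src tgt l \<delta>) e (c - u)) (c - t) =
      - ((if ?b < t then 1 else 0) - (if ?m < t then 1 else 0))"
  proof (rule out_slope_agree_left[where L = "l e"])
    show "\<forall>u\<in>{0..l e}. edge_fun src tgt l (potential_fun src tgt l \<delta>) e u =
        - \<delta> (src e) + ramp (u - ?b) - ramp (u - ?m)"
      using edge_fun_potential_fun[OF assms(1)] by blast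
    show "\<forall>\<^sub>F h in at_right 0. - \<delta> (src e) + ramp (t - h - ?b) - ramp (t - h - ?m) =
        - \<delta> (src e) + ramp (t - ?b) - ramp (t - ?m) -
        of_int ((if ?b < t then 1 else 0) - (if ?m < t then 1 else 0)) * h"
      using ramp_left_linear[of t ?b] ramp_left_linear[of t ?m]
      by eventually_elim (cases "?b < t"; cases "?m < t"; simp add: algebra_simps)
  qed (use assms in auto)
  then show ?thesis by simp
qed

lemma div_fun_potential_fun_Pt:
  assumes "e \<in> E" "0 < t" "t < l e"
  shows "div_fun E src tgt l (potential_fun src tgt l \<delta>) (Pt e t) =
    (if t = chip_shift src tgt l \<delta> e then 1 else 0) - (if t = l e / 2 then 1 else 0)"
  using potential_fun_out_slope[OF assms(1) _ assms(3)] potential_fun_in_slope[OF assms(1,2), of 0]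
    assms
  by (auto simp: div_fun_def)

lemma div_fun_potential_fun_Vtx:
  assumes "finite E"
  shows "div_fun E src tgt l (potential_fun src tgt l \<delta>) (Vtx v) =
    int (card {e\<in>E. src e = v \<and> chip_shift src tgt l \<delta> e = 0}) +
    int (card {e\<in>E. tgt e = v \<and> chip_shift src tgt l \<delta> e = l e})"
proof -
  let ?g = "edge_fun src tgt l (potential_fun src tgt l \<delta>)" and ?b = "chip_shift src tgt l \<delta>"
  have "out_slope (?g e) 0 = (if ?b e = 0 then 1 else 0)" if "e \<in> E" for e
    using potential_fun_out_slope[OF that, of 0] chip_shift_range[OF that] lpos that by auto
  then have "(\<Sum>e\<in>{e\<in>E. src e = v}. out_slope (?g e) 0) = card {e\<in>E. src e = v \<and> ?b e = 0}"
    using assms by (simp add: sum.inter_filter[symmetric] conj_commute)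
  moreover have "out_slope (\<lambda>t. ?g e (l e - t)) 0 = (if ?b e = l e then 1 else 0)" if "e \<in> E" for e
    using potential_fun_in_slope[OF that, of "l e" "l e"] chip_shift_range[OF that] lpos that
    by auto
  then have "(\<Sum>e\<in>{e\<in>E. tgt e = v}. out_slope (\<lambda>t. ?g e (l e - t)) 0) =
      card {e\<in>E. tgt e = v \<and> ?b e = l e}"
    using assms by (simp add: sum.inter_filter[symmetric] conj_commute)
  ultimately show ?thesis by (simp add: div_fun_def)
qed

end

lemma not_rank_neg1I:
  assumes "rational_fun E src tgt l f"
    and "\<forall>x\<in>tpoints V E l. 0 \<le> D x + div_fun E src tgt l f x"
    and "finite {x\<in>tpoints V E l. D x + div_fun E src tgt l f x \<noteq> 0}"
  shows "\<not> rank_neg1 V E src tgt l D"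
proof -
  define D' where "D' x = (if x \<in> tpoints V E l then D x + div_fun E src tgt l f x else 0)" for x
  have "{x. D' x \<noteq> 0} = {x\<in>tpoints V E l. D x + div_fun E src tgt l f x \<noteq> 0}"
    by (auto simp: D'_def)
  then have "is_divisor V E l D'" using assms(3) by (simp add: is_divisor_def)
  moreover have "effective_on V E l D'" using assms(2) by (simp add: effective_on_def D'_def)
  moreover have "lin_equiv V E src tgt l D D'"
    unfolding lin_equiv_def D'_def using assms(1) by auto
  ultimately show ?thesis unfolding rank_neg1_def by blast
qed

text \<open>Chips at midpoints of P cannot move; any other one can reach either end of its edge.\<close>

definition chip_length :: "'e set \<Rightarrow> ('e \<Rightarrow> real) \<Rightarrow> 'e \<Rightarrow> real" where
  "chip_length P l e = (if e \<in> P then 0 else l e / 2)"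

context
  fixes V :: "'v set" and E :: "'e set" and src tgt :: "'e \<Rightarrow> 'v" and w :: "'v \<Rightarrow> nat"
    and l :: "'e \<Rightarrow> real" and P :: "'e set" and \<delta> :: "'v \<Rightarrow> real" and v0 :: 'v
  assumes tc: "tropical_curve V E src tgt w l" and es: "even_subgraph V E src tgt P"
    and lip: "\<forall>e p q. joins E src tgt e p q \<longrightarrow> \<delta> q \<le> \<delta> p + chip_length P l e"
    and tight: "\<forall>q\<in>V - {v0}. \<exists>e p. joins E src tgt e p q \<and> \<delta> q = \<delta> p + chip_length P l e"
    and v0: "0 \<le> T_div V E src tgt w l P (Vtx v0)"
begin

private lemma lpos: "\<forall>e\<in>E. 0 < l e"
  using tc by (simp add: tropical_curve_def)

private lemma finE: "finite E"
  using tc by (simp add: tropical_curve_def)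

private lemma lip_edge: "e \<in> E \<Longrightarrow> \<bar>\<delta> (src e) - \<delta> (tgt e)\<bar> \<le> chip_length P l e"
  using lip[rule_format, of e "src e" "tgt e"] lip[rule_format, of e "tgt e" "src e"]
  by (auto simp: joins_def)

private lemma lip_half: "\<forall>e\<in>E. \<bar>\<delta> (src e) - \<delta> (tgt e)\<bar> \<le> l e / 2"
proof
  fix e assume "e \<in> E"
  then have "chip_length P l e \<le> l e / 2" using lpos by (auto simp: chip_length_def less_imp_le)
  with lip_edge[OF \<open>e \<in> E\<close>] show "\<bar>\<delta> (src e) - \<delta> (tgt e)\<bar> \<le> l e / 2" by linarith
qed

private lemmas rational_fun = rational_fun_potential_fun[where \<delta> = \<delta> and src = src and tgt = tgt,
  OF lpos lip_half]
  and div_fun_Pt = div_fun_potential_fun_Pt[where \<delta> = \<delta> and src = src and tgt = tgt,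
  OF lpos lip_half]
  and div_fun_Vtx = div_fun_potential_fun_Vtx[where \<delta> = \<delta> and src = src and tgt = tgt,
  OF lpos lip_half finE]

private lemma T_div_potential_fun_Pt_nonneg:
  assumes "e \<in> E" "0 < t" "t < l e"
  shows "0 \<le> T_div V E src tgt w l P (Pt e t) +
    div_fun E src tgt l (potential_fun src tgt l \<delta>) (Pt e t)"
proof (cases "e \<in> P")
  case True
  then have "chip_shift src tgt l \<delta> e = l e / 2"
    using lip_edge[OF assms(1)] by (simp add: chip_length_def chip_shift_def)
  with True show ?thesis
    using div_fun_Pt[OF assms] by (simp add: T_div_def)
next
  case False
  then show ?thesis
    using div_fun_Pt[OF assms] assms(1) by (simp add: T_div_def)
qed

private lemma T_div_potential_fun_Vtx_nonneg:
  assumes "v \<in> V"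
  shows "0 \<le> T_div V E src tgt w l P (Vtx v) +
    div_fun E src tgt l (potential_fun src tgt l \<delta>) (Vtx v)"
proof -
  let ?b = "chip_shift src tgt l \<delta>"
  let ?n = "int (card {e\<in>E. src e = v \<and> ?b e = 0}) + int (card {e\<in>E. tgt e = v \<and> ?b e = l e})"
  have div: "div_fun E src tgt l (potential_fun src tgt l \<delta>) (Vtx v) = ?n"
    using div_fun_Vtx .
  have T: "T_div V E src tgt w l P (Vtx v) = int (deg_in P src tgt v div 2) - 1 + int (w v)"
    using assms by (simp add: T_div_def)
  show ?thesis
  proof (cases "0 \<le> T_div V E src tgt w l P (Vtx v)")
    case True then show ?thesis unfolding div by simp
  next
    case False
    then have "v \<noteq> v0" using v0 by auto
    have "deg_in P src tgt v = 0" "w v = 0"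
      using False es assms unfolding T even_subgraph_def by (auto elim!: evenE)
    moreover have "finite P" using es finE by (auto simp: even_subgraph_def dest: finite_subset)
    ultimately have no_P: "e \<notin> P" if "src e = v \<or> tgt e = v" for e
      using that unfolding deg_in_def by auto
    obtain e p where e: "joins E src tgt e p v" "\<delta> v = \<delta> p + l e / 2"
      using tight \<open>v \<noteq> v0\<close> assms no_P by (fastforce simp: joins_def chip_length_def)
    then have "e \<in> {e\<in>E. src e = v \<and> ?b e = 0} \<or> e \<in> {e\<in>E. tgt e = v \<and> ?b e = l e}"
      by (auto simp: joins_def chip_shift_def)
    then have "0 < card {e\<in>E. src e = v \<and> ?b e = 0} \<or> 0 < card {e\<in>E. tgt e = v \<and> ?b e = l e}"
      using finE by (auto simp: card_gt_0_iff)
    then have "1 \<le> ?n" by linarith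
    then show ?thesis unfolding div T using \<open>w v = 0\<close> \<open>deg_in P src tgt v = 0\<close> by simp
  qed
qed

lemma not_rank_neg1_T_div:
  "\<not> rank_neg1 V E src tgt l (T_div V E src tgt w l P)"
proof (rule not_rank_neg1I[OF rational_fun])
  let ?f = "potential_fun src tgt l \<delta>" and ?T = "T_div V E src tgt w l P"
  show "\<forall>x\<in>tpoints V E l. 0 \<le> ?T x + div_fun E src tgt l ?f x"
    using T_div_potential_fun_Pt_nonneg T_div_potential_fun_Vtx_nonneg by (auto simp: tpoints_def)
  have "{x\<in>tpoints V E l. ?T x + div_fun E src tgt l ?f x \<noteq> 0} \<subseteq>
      Vtx ` V \<union> (\<lambda>e. Pt e (chip_shift src tgt l \<delta> e)) ` E \<union> (\<lambda>e. Pt e (l e / 2)) ` E"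
  proof clarify
    fix x assume x: "x \<in> tpoints V E l" "?T x + div_fun E src tgt l ?f x \<noteq> 0"
      "x \<notin> (\<lambda>e. Pt e (l e / 2)) ` E" "x \<notin> (\<lambda>e. Pt e (chip_shift src tgt l \<delta> e)) ` E"
    show "x \<in> Vtx ` V"
    proof (cases x)
      case (Pt e t)
      with x have "e \<in> E" "0 < t" "t < l e" "t \<noteq> l e / 2" "t \<noteq> chip_shift src tgt l \<delta> e"
        by (auto simp: tpoints_def)
      with x(2) show ?thesis
        using div_fun_Pt by (simp add: Pt T_div_def)
    qed (use x(1) in \<open>auto simp: tpoints_def\<close>)
  qed
  moreover have "finite V" using tc by (simp add: tropical_curve_def)
  ultimately show "finite {x\<in>tpoints V E l. ?T x + div_fun E src tgt l ?f x \<noteq> 0}"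
    using finE by (auto intro: finite_subset)
qed

end

lemma not_rank_neg1_if_T_div_Vtx_nonneg:
  assumes tc: "tropical_curve V E src tgt w l" and es: "even_subgraph V E src tgt P"
    and "v0 \<in> V" "0 \<le> T_div V E src tgt w l P (Vtx v0)"
  shows "\<not> rank_neg1 V E src tgt l (T_div V E src tgt w l P)"
proof -
  have "\<forall>e\<in>E. 0 \<le> chip_length P l e"
    using tc by (auto simp: tropical_curve_def chip_length_def less_imp_le)
  then obtain \<delta> where "\<forall>e p q. joins E src tgt e p q \<longrightarrow> \<delta> q \<le> \<delta> p + chip_length P l e"
      "\<forall>q\<in>V - {v0}. \<exists>e p. joins E src tgt e p q \<and> \<delta> q = \<delta> p + chip_length P l e"
    using tight_potential_exists[of V E src tgt v0] tc \<open>v0 \<in> V\<close>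
    unfolding tropical_curve_def by blast
  then show ?thesis using not_rank_neg1_T_div[OF tc es] assms(4) by blast
qed

lemma T_div_Vtx_nonneg_exists:
  assumes tc: "tropical_curve V E src tgt w l" and es: "even_subgraph V E src tgt P"
    and "\<not> (P = {} \<and> (\<forall>v\<in>V. w v = 0))"
  shows "\<exists>v\<in>V. 0 \<le> T_div V E src tgt w l P (Vtx v)"
proof (cases "\<forall>v\<in>V. w v = 0")
  case True
  then obtain e where "e \<in> P" using assms(3) by blast
  have "finite P" "P \<subseteq> E" using es tc by (auto simp: even_subgraph_def tropical_curve_def
        dest: finite_subset)
  then have "src e \<in> V" "deg_in P src tgt (src e) \<noteq> 0"
    using \<open>e \<in> P\<close> tc by (auto simp: tropical_curve_def deg_in_def card_eq_0_iff)
  moreover have "even (deg_in P src tgt (src e))"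
    using es \<open>src e \<in> V\<close> by (simp add: even_subgraph_def)
  ultimately show ?thesis by (intro bexI[of _ "src e"]) (auto simp: T_div_def elim!: evenE)
next
  case False
  then obtain v where "v \<in> V" "w v \<noteq> 0" by blast
  then show ?thesis by (intro bexI[of _ v]) (auto simp: T_div_def)
qed

lemma rank_neg1_T_div_empty:
  assumes tc: "tropical_curve V E src tgt w l" and pure: "\<forall>v\<in>V. w v = 0"
  shows "rank_neg1 V E src tgt l (T_div V E src tgt w l {})"
  unfolding rank_neg1_def lin_equiv_def effective_on_def
proof clarify
  fix D' f
  assume "rational_fun E src tgt l f"
    and eq: "\<forall>x\<in>tpoints V E l. D' x = T_div V E src tgt w l {} x + div_fun E src tgt l f x"
    and eff: "\<forall>x\<in>tpoints V E l. 0 \<le> D' x"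
  then obtain A K S where "\<forall>e\<in>E. affine_partition (l e) (edge_fun src tgt l f e) (A e) (K e) (S e)"
    unfolding rational_fun_iff by metis
  then obtain x where "x \<in> tpoints V E l" "T_div V E src tgt w l {} x + div_fun E src tgt l f x < 0"
    using exists_negative_point_T_div_empty[of E l src tgt f A K S V w] tc pure
    unfolding tropical_curve_def by blast
  with eq eff show False by fastforce
qed

theorem theorem3p6:
  fixes V :: "'v set" and E :: "'e set" and src tgt :: "'e \<Rightarrow> 'v"
    and w :: "'v \<Rightarrow> nat" and l :: "'e \<Rightarrow> real" and P :: "'e set"
  assumes "tropical_curve V E src tgt w l"
    and "even_subgraph V E src tgt P"
  shows "rank_neg1 V E src tgt l (T_div V E src tgt w l P)
         \<longleftrightarrow> (P = {} \<and> (\<forall>v\<in>V. w v = 0))"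
  using rank_neg1_T_div_empty[OF assms(1)] T_div_Vtx_nonneg_exists[OF assms]
    not_rank_neg1_if_T_div_Vtx_nonneg[OF assms] by blast

end
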